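(* Let $V$ be a finite set of $n$ agents in the setting described in the context (binary state $S$, private signals $W_u$ that are i.i.d.\ with law $\mu_S$ conditionally on $S$, information $\sigma$-algebras $\mathcal{F}_u$ with $\sigma(W_u)\subseteq\mathcal{F}_u\subseteq\sigma(W_v: v\in V)$). Assume common knowledge of beliefs: for all $u,w\in V$, $X_u=\mathbb{P}(S=1\mid\mathcal{F}_u)$ is almost surely $\mathcal{F}_w$-measurable, and let $X$ be a random variable such that almost surely $X=X_u$ for all $u\in V$. Then almost surely $$X=\mathbb{P}(S=1\mid W_1,\ldots,W_n).$$
   Context: The state of the world $S$ is uniform on $\{0,1\}$. $\mu_0\neq\mu_1$ are probability measures on a measurable space $(\Omega,\mathcal{O})$, mutually absolutely continuous, and $z(\omega)=\log\frac{d\mu_1}{d\mu_0}(\omega)$ is the log-likelihood ratio. $V$ is a finite set of $n$ agents; agent $u$ has a private signal $W_u\in\Omega$, and conditionally on $S$ the signals $(W_u)_{u\in V}$ are independent, each with law $\mu_S$. For each agent $u$, $\mathcal{F}_u$ is a $\sigma$-algebra (what $u$ knows) with $\sigma(W_u)\subseteq\mathcal{F}_u\subseteq\sigma(W_v:v\in V)$. The posterior belief of $u$ is $X_u=\mathbb{P}(S=1\mid\mathcal{F}_u)$. *)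

theory Defs
  imports "HOL-Probability.Probability"
begin

definition sigma_signals :: "'a measure \<Rightarrow> 'v set \<Rightarrow> ('v \<Rightarrow> 'a \<Rightarrow> 'b) \<Rightarrow> 'b measure \<Rightarrow> 'a set set" where
  "sigma_signals M V W N = sigma_sets (space M) (\<Union>v\<in>V. {W v -` A \<inter> space M | A. A \<in> sets N})"

definition posterior :: "'a measure \<Rightarrow> 'a measure \<Rightarrow> ('a \<Rightarrow> nat) \<Rightarrow> 'a \<Rightarrow> real" where
  "posterior M G S = real_cond_exp M G (\<lambda>x. if S x = 1 then 1 else 0)"

end

theory Submission
  imports Defs
begin

text \<open>Write L for the likelihood ratio of all signals and B for the common belief. On the event
  S = 0 the full-information posterior is L/(1+L), so it suffices to show that the defect
  D = 1[S=0] (1-B)(L(1-B) - B) vanishes. Since ln L - logit B = \<Sum>u. a u with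
  a u = ln (d\<mu>1/d\<mu>0 (W u)) - logit B / n, and B is known to every agent, each a u is F u-measurable.
  Changing measure between the two states and conditioning on F u shows that D is orthogonal to
  every bounded function of every a u; but D has the sign of \<Sum>u. a u. A truncation and Fatou
  argument then forces D = 0 almost surely.\<close>

section \<open>Orthogonality to bounded functions of the summands\<close>

definition orthogonal_to_bounded :: "'a measure \<Rightarrow> ('a \<Rightarrow> real) \<Rightarrow> ('a \<Rightarrow> real) \<Rightarrow> bool" where
  "orthogonal_to_bounded M Z a \<longleftrightarrow>
    (\<forall>\<phi> B. \<phi> \<in> borel_measurable borel \<longrightarrow> (\<forall>t. \<bar>\<phi> t\<bar> \<le> B) \<longrightarrow> (\<integral>x. Z x * \<phi> (a x) \<partial>M) = 0)"

lemma orthogonal_to_boundedD: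
  "orthogonal_to_bounded M Z a \<Longrightarrow> \<phi> \<in> borel_measurable borel \<Longrightarrow> (\<And>t. \<bar>\<phi> t\<bar> \<le> B)
    \<Longrightarrow> (\<integral>x. Z x * \<phi> (a x) \<partial>M) = 0"
  by (auto simp: orthogonal_to_bounded_def)

lemma integral_mult_neg_part_eq_0:
  fixes Z a :: "'a \<Rightarrow> real"
  assumes [measurable]: "Z \<in> borel_measurable M" "a \<in> borel_measurable M"
    and orth: "orthogonal_to_bounded M Z a"
    and int: "integrable M (\<lambda>x. Z x * min (a x) 0)"
  shows "(\<integral>x. Z x * min (a x) 0 \<partial>M) = 0"
proof -
  let ?s = "\<lambda>(n::nat) x. Z x * max (min (a x) 0) (- real n)"
  have "(\<lambda>n. integral\<^sup>L M (?s n)) \<longlonglongrightarrow> (\<integral>x. Z x * min (a x) 0 \<partial>M)"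
  proof (rule integral_dominated_convergence[where w="\<lambda>x. \<bar>Z x * min (a x) 0\<bar>"])
    show "integrable M (\<lambda>x. \<bar>Z x * min (a x) 0\<bar>)" using int by auto
    show "AE x in M. (\<lambda>n. ?s n x) \<longlonglongrightarrow> Z x * min (a x) 0"
    proof (intro AE_I2 tendsto_eventually)
      fix x
      obtain n0 :: nat where "real n0 \<ge> - a x" using real_arch_simple by blast
      then have "\<forall>n\<ge>n0. ?s n x = Z x * min (a x) 0"
        by (auto simp: max_def min_def)
      then show "\<forall>\<^sub>F n in sequentially. ?s n x = Z x * min (a x) 0"
        by (auto simp: eventually_sequentially)
    qed
    show "AE x in M. norm (?s n x) \<le> \<bar>Z x * min (a x) 0\<bar>" for n
    proof (intro AE_I2)
      fix x
      have "\<bar>max (min (a x) 0) (- real n)\<bar> \<le> \<bar>min (a x) 0\<bar>" by (auto simp: max_def min_def)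
      then show "norm (?s n x) \<le> \<bar>Z x * min (a x) 0\<bar>"
        by (simp add: abs_mult mult_left_mono)
    qed
  qed auto
  moreover have "integral\<^sup>L M (?s n) = 0" for n
    by (rule orthogonal_to_boundedD[OF orth, where B="real n"]) (auto simp: max_def min_def)
  ultimately show ?thesis by (simp add: LIMSEQ_const_iff)
qed

lemma nn_integral_le_if_integrals_eq:
  fixes h :: "nat \<Rightarrow> 'a \<Rightarrow> real"
  assumes int: "\<And>n. integrable M (h n)" and nonneg: "\<And>n. AE x in M. 0 \<le> h n x"
    and eq: "\<And>n. (\<integral>x. h n x \<partial>M) = c"
    and lim: "\<And>x. (\<lambda>n. h n x) \<longlonglongrightarrow> g x"
  shows "(\<integral>\<^sup>+x. ennreal (g x) \<partial>M) \<le> ennreal c"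
proof -
  have "liminf (\<lambda>n. ennreal (h n x)) = ennreal (g x)" for x
    using lim[of x] by (intro lim_imp_Liminf) (auto intro: tendsto_ennrealI)
  then have "(\<integral>\<^sup>+x. ennreal (g x) \<partial>M) \<le> liminf (\<lambda>n. \<integral>\<^sup>+x. ennreal (h n x) \<partial>M)"
    using nn_integral_liminf[of "\<lambda>n x. ennreal (h n x)" M] int by simp
  also have "\<dots> = ennreal c"
    using nn_integral_eq_integral[OF int nonneg] by (simp add: eq Liminf_const)
  finally show ?thesis .
qed

lemma abs_mult_le_if_abs_le_1: "\<bar>a::real\<bar> \<le> 1 \<Longrightarrow> \<bar>b\<bar> \<le> B \<Longrightarrow> \<bar>a * b\<bar> \<le> B"
  by (metis abs_ge_zero abs_mult dual_order.trans mult_left_le_one_le)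

lemma integrable_mult_bounded:
  fixes f g :: "'a \<Rightarrow> real"
  assumes "integrable M f" "g \<in> borel_measurable M" "\<And>x. \<bar>g x\<bar> \<le> B"
  shows "integrable M (\<lambda>x. f x * g x)"
proof (rule Bochner_Integration.integrable_bound[where f="\<lambda>x. B * \<bar>f x\<bar>"])
  show "AE x in M. norm (f x * g x) \<le> norm (B * \<bar>f x\<bar>)"
  proof (intro AE_I2)
    fix x
    have "\<bar>g x\<bar> \<le> \<bar>B\<bar>" using assms(3)[of x] by linarith
    then have "\<bar>f x\<bar> * \<bar>g x\<bar> \<le> \<bar>f x\<bar> * \<bar>B\<bar>" by (rule mult_left_mono) simp
    then show "norm (f x * g x) \<le> norm (B * \<bar>f x\<bar>)" by (simp add: abs_mult mult.commute)
  qed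
qed (use assms in auto)

lemma integral_mult_min_eq_0:
  fixes Z a :: "'a \<Rightarrow> real"
  assumes intZ: "integrable M Z" and [measurable]: "a \<in> borel_measurable M"
    and orth: "orthogonal_to_bounded M Z a"
    and int_neg: "integrable M (\<lambda>x. Z x * min (a x) 0)" and c: "0 \<le> c"
  shows "integrable M (\<lambda>x. Z x * min (a x) c)" and "(\<integral>x. Z x * min (a x) c \<partial>M) = 0"
proof -
  have [measurable]: "Z \<in> borel_measurable M" using intZ by auto
  have split: "Z x * min (a x) c = Z x * min (max (a x) 0) c + Z x * min (a x) 0" for x
    using c by (auto simp: min_def max_def algebra_simps)
  have int_pos: "integrable M (\<lambda>x. Z x * min (max (a x) 0) c)"
    using c by (intro integrable_mult_bounded[OF intZ, where B=c]) auto
  then show "integrable M (\<lambda>x. Z x * min (a x) c)" unfolding split using int_neg by auto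
  have "(\<integral>x. Z x * min (max (a x) 0) c \<partial>M) = 0"
    using c by (intro orthogonal_to_boundedD[OF orth, where B=c]) auto
  moreover have "(\<integral>x. Z x * min (a x) 0 \<partial>M) = 0"
    by (rule integral_mult_neg_part_eq_0[OF _ _ orth int_neg]) auto
  ultimately show "(\<integral>x. Z x * min (a x) c \<partial>M) = 0"
    unfolding split using int_pos int_neg by simp
qed

lemma AE_eq_0_if_nn_integral_add_le:
  fixes f C :: "'a \<Rightarrow> real"
  assumes [measurable]: "f \<in> borel_measurable M" and f_nonneg: "AE x in M. 0 \<le> f x"
    and intC: "integrable M C" and C_nonneg: "\<And>x. 0 \<le> C x"
    and le: "(\<integral>\<^sup>+x. ennreal (f x + C x) \<partial>M) \<le> ennreal (\<integral>x. C x \<partial>M)"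
  shows "AE x in M. f x = 0"
proof -
  have C_nn_integral: "(\<integral>\<^sup>+x. ennreal (C x) \<partial>M) = ennreal (\<integral>x. C x \<partial>M)"
    using intC C_nonneg by (intro nn_integral_eq_integral) auto
  have "(\<integral>\<^sup>+x. ennreal (f x + C x) \<partial>M) = (\<integral>\<^sup>+x. ennreal (f x) + ennreal (C x) \<partial>M)"
    using f_nonneg by (intro nn_integral_cong_AE) (auto simp: ennreal_plus C_nonneg)
  also have "\<dots> = (\<integral>\<^sup>+x. ennreal (f x) \<partial>M) + ennreal (\<integral>x. C x \<partial>M)"
    using intC by (subst nn_integral_add) (auto simp: C_nn_integral)
  finally have "ennreal (\<integral>x. C x \<partial>M) + (\<integral>\<^sup>+x. ennreal (f x) \<partial>M) \<le> ennreal (\<integral>x. C x \<partial>M) + 0"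
    using le by (simp add: add.commute)
  then have "(\<integral>\<^sup>+x. ennreal (f x) \<partial>M) = 0"
    by (subst (asm) ennreal_add_left_cancel_le) auto
  then have "AE x in M. ennreal (f x) = 0"
    by (subst (asm) nn_integral_0_iff_AE) auto
  with f_nonneg show ?thesis by eventually_elim auto
qed

lemma mult_sum_min_add_nonneg:
  fixes z c :: real and a :: "'v \<Rightarrow> real"
  assumes c: "0 \<le> c" and sign: "(0 < z \<longrightarrow> 0 < (\<Sum>u\<in>V. a u)) \<and> (z < 0 \<longrightarrow> (\<Sum>u\<in>V. a u) < 0)"
  shows "0 \<le> z * (\<Sum>u\<in>V. min (a u) c) + (\<Sum>u\<in>V. \<bar>z * min (a u) 0\<bar>)"
proof (cases "0 \<le> z")
  case True
  have "- (\<Sum>u\<in>V. \<bar>z * min (a u) 0\<bar>) = z * (\<Sum>u\<in>V. min (a u) 0)"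
    using True by (auto simp: sum_distrib_left sum_negf[symmetric] abs_mult intro!: sum.cong)
  also have "\<dots> \<le> z * (\<Sum>u\<in>V. min (a u) c)"
    using True c by (intro mult_left_mono sum_mono) auto
  finally show ?thesis by linarith
next
  case False
  then have "(\<Sum>u\<in>V. min (a u) c) < 0"
    using sign sum_mono[of V "\<lambda>u. min (a u) c" a] by auto
  then show ?thesis using False by (simp add: mult_nonpos_nonpos sum_nonneg)
qed

text \<open>Truncating the a u from above gives integrable approximations of Z times their sum, and
  Fatou's lemma passes to the limit; this is why only the negative parts of the a u need to be
  integrable against Z.\<close>
lemma AE_eq_0_if_orthogonal_to_summands:
  fixes Z :: "'a \<Rightarrow> real" and a :: "'v \<Rightarrow> 'a \<Rightarrow> real"
  assumes V: "finite V"
    and a_measurable[measurable]: "\<And>u. u \<in> V \<Longrightarrow> a u \<in> borel_measurable M"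
    and intZ: "integrable M Z"
    and orth: "\<And>u. u \<in> V \<Longrightarrow> orthogonal_to_bounded M Z (a u)"
    and int_neg: "\<And>u. u \<in> V \<Longrightarrow> integrable M (\<lambda>x. Z x * min (a u x) 0)"
    and sign: "AE x in M. (0 < Z x \<longrightarrow> 0 < (\<Sum>u\<in>V. a u x)) \<and> (Z x < 0 \<longrightarrow> (\<Sum>u\<in>V. a u x) < 0)"
  shows "AE x in M. Z x = 0"
proof -
  have [measurable]: "Z \<in> borel_measurable M" using intZ by auto
  define C where "C x = (\<Sum>u\<in>V. \<bar>Z x * min (a u x) 0\<bar>)" for x
  define h where "h n x = Z x * (\<Sum>u\<in>V. min (a u x) (real n)) + C x" for n x
  have C_nonneg: "0 \<le> C x" for x unfolding C_def by (auto intro!: sum_nonneg)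
  have trunc: "integrable M (\<lambda>x. Z x * min (a u x) (real n))"
    "(\<integral>x. Z x * min (a u x) (real n) \<partial>M) = 0" if u: "u \<in> V" for u n
    using integral_mult_min_eq_0[OF intZ a_measurable[OF u] orth[OF u] int_neg[OF u] of_nat_0_le_iff]
    by blast+
  have int_C: "integrable M C" unfolding C_def using int_neg by auto
  have int_trunc: "integrable M (\<lambda>x. Z x * (\<Sum>u\<in>V. min (a u x) (real n)))" for n
    unfolding sum_distrib_left using trunc(1) by auto
  have int_h: "integrable M (h n)" for n
    unfolding h_def using int_trunc int_C by (rule Bochner_Integration.integrable_add)
  have integral_h: "(\<integral>x. h n x \<partial>M) = (\<integral>x. C x \<partial>M)" for n
  proof -
    have "(\<integral>x. Z x * (\<Sum>u\<in>V. min (a u x) (real n)) \<partial>M) = 0"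
      unfolding sum_distrib_left using trunc by (simp add: integral_sum)
    then show ?thesis unfolding h_def using int_trunc int_C by simp
  qed
  have h_nonneg: "AE x in M. 0 \<le> h n x" for n
    using sign by eventually_elim (simp add: h_def C_def mult_sum_min_add_nonneg)
  have h_lim: "(\<lambda>n. h n x) \<longlonglongrightarrow> Z x * (\<Sum>u\<in>V. a u x) + C x" for x
  proof -
    have "(\<lambda>n. min (a u x) (real n)) \<longlonglongrightarrow> a u x" for u
    proof (rule tendsto_eventually)
      obtain n0 :: nat where "a u x \<le> real n0" using real_arch_simple by blast
      then show "\<forall>\<^sub>F n in sequentially. min (a u x) (real n) = a u x"
        unfolding eventually_sequentially by (metis min.absorb1 of_nat_mono order_trans)
    qed
    then show ?thesis unfolding h_def by (intro tendsto_intros)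
  qed
  have ZD_nonneg: "AE x in M. 0 \<le> Z x * (\<Sum>u\<in>V. a u x)"
    using sign by eventually_elim (auto simp: zero_le_mult_iff not_less linorder_neq_iff)
  have "AE x in M. Z x * (\<Sum>u\<in>V. a u x) = 0"
    using ZD_nonneg int_C C_nonneg
      nn_integral_le_if_integrals_eq[OF int_h h_nonneg integral_h h_lim]
    by (intro AE_eq_0_if_nn_integral_add_le) auto
  then show ?thesis using sign by eventually_elim auto
qed

section \<open>Product laws of independent signals\<close>

lemma distr_density_indicator_eq_PiM:
  fixes M :: "'a measure" and \<mu> :: "'b measure" and V :: "'v set"
  assumes M: "prob_space M" and \<mu>: "prob_space \<mu>" and V: "finite V"
    and W: "\<forall>v\<in>V. W v \<in> measurable M \<mu>" and E: "E \<in> sets M"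
    and law: "\<And>A. (\<forall>u\<in>V. A u \<in> sets \<mu>) \<Longrightarrow>
      measure M {x \<in> space M. x \<in> E \<and> (\<forall>u\<in>V. W u x \<in> A u)} = 1/2 * (\<Prod>u\<in>V. measure \<mu> (A u))"
  shows "distr (density M (\<lambda>x. 2 * indicator E x)) (PiM V (\<lambda>_. \<mu>)) (\<lambda>x. \<lambda>u\<in>V. W u x)
    = PiM V (\<lambda>_. \<mu>)" (is "?D = _")
proof -
  interpret M: prob_space M by fact
  interpret \<mu>: prob_space \<mu> by fact
  interpret P: product_sigma_finite "\<lambda>_. \<mu>" by standard
  have Wv[measurable]: "(\<lambda>x. \<lambda>u\<in>V. W u x) \<in> measurable M (PiM V (\<lambda>_. \<mu>))"
    using W by (intro measurable_restrict) auto
  show ?thesis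
  proof (rule P.PiM_eqI[OF V])
    fix A assume A: "\<And>i. i \<in> V \<Longrightarrow> A i \<in> sets \<mu>"
    define C where "C = {x \<in> space M. \<forall>u\<in>V. W u x \<in> A u}"
    have PA: "Pi\<^sub>E V A \<in> sets (PiM V (\<lambda>_. \<mu>))" using A V by (intro sets_PiM_I_finite) auto
    have pre: "(\<lambda>x. \<lambda>u\<in>V. W u x) -` Pi\<^sub>E V A \<inter> space M = C"
      by (auto simp: PiE_iff C_def)
    have C: "C \<in> sets M" using measurable_sets[OF Wv PA] by (simp add: pre)
    have "emeasure ?D (Pi\<^sub>E V A) = emeasure (density M (\<lambda>x. 2 * indicator E x)) C"
      using PA by (subst emeasure_distr) (simp_all add: pre)
    also have "\<dots> = (\<integral>\<^sup>+x. 2 * indicator (E \<inter> C) x \<partial>M)"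
      using C E by (subst emeasure_density) (auto intro!: nn_integral_cong simp: indicator_def)
    also have "\<dots> = ennreal (2 * measure M (E \<inter> C))"
      using C E by (simp add: nn_integral_cmult_indicator M.emeasure_eq_measure ennreal_mult)
    also have "E \<inter> C = {x \<in> space M. x \<in> E \<and> (\<forall>u\<in>V. W u x \<in> A u)}"
      using E sets.sets_into_space by (auto simp: C_def)
    also have "ennreal (2 * measure M \<dots>) = (\<Prod>u\<in>V. emeasure \<mu> (A u))"
      using A by (simp add: law \<mu>.emeasure_eq_measure prod_ennreal)
    finally show "emeasure ?D (Pi\<^sub>E V A) = (\<Prod>u\<in>V. emeasure \<mu> (A u))" .
  qed simp
qed

lemma indicator_PiE_eq_prod:
  assumes "finite I" and "x \<in> extensional I"
  shows "indicator (Pi\<^sub>E I A) x = (\<Prod>i\<in>I. indicator (A i) (x i) :: 'c :: comm_semiring_1)"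
proof (cases "x \<in> Pi\<^sub>E I A")
  case False
  then obtain i where "i \<in> I" "x i \<notin> A i" using assms(2) by (auto simp: PiE_iff)
  then show ?thesis using False by (auto intro!: prod_zero[OF assms(1)] bexI[of _ i])
qed (auto simp: indicator_def PiE_iff)

lemma PiM_density_prod:
  fixes \<mu>0 \<mu>1 :: "'b measure" and V :: "'v set" and \<rho> :: "'b \<Rightarrow> real"
  assumes \<mu>0: "prob_space \<mu>0" and \<mu>1: "prob_space \<mu>1" and V: "finite V"
    and [measurable]: "\<rho> \<in> borel_measurable \<mu>0" and density: "\<mu>1 = density \<mu>0 (\<lambda>y. ennreal (\<rho> y))"
  shows "PiM V (\<lambda>_. \<mu>1) = density (PiM V (\<lambda>_. \<mu>0)) (\<lambda>x. \<Prod>u\<in>V. ennreal (\<rho> (x u)))"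
    (is "_ = ?D")
proof -
  interpret \<mu>0: prob_space \<mu>0 by fact
  interpret \<mu>1: prob_space \<mu>1 by fact
  interpret P1: product_sigma_finite "\<lambda>_. \<mu>1" by standard
  interpret P0: product_sigma_finite "\<lambda>_. \<mu>0" by standard
  have sets_\<mu>1: "sets \<mu>1 = sets \<mu>0" using density by simp
  show ?thesis
  proof (rule P1.PiM_eqI[OF V, symmetric])
    have "sets (PiM V (\<lambda>_. \<mu>1)) = sets (PiM V (\<lambda>_. \<mu>0))"
      using sets_\<mu>1 by (intro sets_PiM_cong) auto
    then show "sets ?D = sets (PiM V (\<lambda>_. \<mu>1))" by simp
    fix A assume "\<And>i. i \<in> V \<Longrightarrow> A i \<in> sets \<mu>1"
    then have A: "A i \<in> sets \<mu>0" if "i \<in> V" for i using that sets_\<mu>1 by simp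
    have "Pi\<^sub>E V A \<in> sets (PiM V (\<lambda>_. \<mu>0))" using A V by (intro sets_PiM_I_finite) auto
    then have "emeasure ?D (Pi\<^sub>E V A)
        = (\<integral>\<^sup>+x. (\<Prod>u\<in>V. ennreal (\<rho> (x u))) * indicator (Pi\<^sub>E V A) x \<partial>PiM V (\<lambda>_. \<mu>0))"
      by (subst emeasure_density) auto
    also have "\<dots> = (\<integral>\<^sup>+x. (\<Prod>u\<in>V. ennreal (\<rho> (x u)) * indicator (A u) (x u)) \<partial>PiM V (\<lambda>_. \<mu>0))"
      by (intro nn_integral_cong)
         (auto simp: space_PiM indicator_PiE_eq_prod[OF V] prod.distrib PiE_iff)
    also have "\<dots> = (\<Prod>u\<in>V. \<integral>\<^sup>+y. ennreal (\<rho> y) * indicator (A u) y \<partial>\<mu>0)"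
      using A by (intro P0.product_nn_integral_prod[OF V]) auto
    also have "\<dots> = (\<Prod>u\<in>V. emeasure \<mu>1 (A u))"
      using A by (intro prod.cong refl) (simp add: density emeasure_density)
    finally show "emeasure ?D (Pi\<^sub>E V A) = (\<Prod>u\<in>V. emeasure \<mu>1 (A u))" .
  qed
qed

lemma sigma_signals_eq_vimage_PiM:
  fixes M :: "'a measure" and \<mu> :: "'b measure" and V :: "'v set"
  assumes W: "\<forall>v\<in>V. W v \<in> measurable M \<mu>"
  shows "sigma_signals M V W \<mu> = {(\<lambda>x. \<lambda>u\<in>V. W u x) -` B \<inter> space M | B. B \<in> sets (PiM V (\<lambda>_. \<mu>))}"
proof -
  let ?Wv = "\<lambda>x. \<lambda>u\<in>V. W u x"
  let ?\<Omega> = "\<Pi>\<^sub>E i\<in>V. space \<mu>"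
  let ?G = "{{f\<in>?\<Omega>. f i \<in> A} | i A. i \<in> V \<and> A \<in> sets \<mu>}"
  have sp: "\<And>x v. x \<in> space M \<Longrightarrow> v \<in> V \<Longrightarrow> W v x \<in> space \<mu>" using W by (blast intro: measurable_space)
  have map: "?Wv \<in> space M \<rightarrow> ?\<Omega>" using W by (auto simp: measurable_def Pi_iff)
  have "{?Wv -` B \<inter> space M | B. B \<in> sets (PiM V (\<lambda>_. \<mu>))} = {?Wv -` B \<inter> space M | B. B \<in> sigma_sets ?\<Omega> ?G}"
    by (simp add: sets_PiM_single)
  also have "\<dots> = sigma_sets (space M) {?Wv -` B \<inter> space M | B. B \<in> ?G}"
    by (rule sigma_sets_vimage_commute[OF map])
  also have "{?Wv -` B \<inter> space M | B. B \<in> ?G} = (\<Union>v\<in>V. {W v -` A \<inter> space M | A. A \<in> sets \<mu>})"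
  proof (intro equalityI subsetI)
    fix X assume "X \<in> {?Wv -` B \<inter> space M | B. B \<in> ?G}"
    then obtain i A where iA: "i \<in> V" "A \<in> sets \<mu>" "X = ?Wv -` {f\<in>?\<Omega>. f i \<in> A} \<inter> space M" by blast
    then have "X = W i -` A \<inter> space M" using sp by (auto simp: PiE_iff)
    then show "X \<in> (\<Union>v\<in>V. {W v -` A \<inter> space M | A. A \<in> sets \<mu>})" using iA by blast
  next
    fix X assume "X \<in> (\<Union>v\<in>V. {W v -` A \<inter> space M | A. A \<in> sets \<mu>})"
    then obtain i A where iA: "i \<in> V" "A \<in> sets \<mu>" "X = W i -` A \<inter> space M" by blast
    then have "X = ?Wv -` {f\<in>?\<Omega>. f i \<in> A} \<inter> space M" using sp by (auto simp: PiE_iff)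
    then show "X \<in> {?Wv -` B \<inter> space M | B. B \<in> ?G}" using iA by blast
  qed
  finally show ?thesis unfolding sigma_signals_def by (rule sym)
qed

lemma mult_neg_min_ln_le_1: "0 \<le> (t::real) \<Longrightarrow> t * (- min (ln t) 0) \<le> 1"
proof -
  assume t: "0 \<le> t"
  show ?thesis
  proof (cases "t = 0 \<or> t \<ge> 1")
    case True then show ?thesis by auto
  next
    case False
    then have t01: "0 < t" "t < 1" using t by auto
    have "ln (1/t) \<le> 1/t - 1" using t01 by (intro ln_le_minus_one) auto
    then have "- ln t \<le> 1/t - 1" using t01 by (simp add: ln_div)
    then have "t * (- ln t) \<le> t * (1/t - 1)" using t01 by (intro mult_left_mono) auto
    also have "\<dots> = 1 - t" using t01 by (simp add: field_simps)
    finally show ?thesis using t01 by (simp add: min_def)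
  qed
qed

definition logit :: "real \<Rightarrow> real" where
  "logit p = ln p - ln (1 - p)"

lemma mult_pos_part_logit_le_1: "0 \<le> (g::real) \<Longrightarrow> g \<le> 1 \<Longrightarrow> (1 - g) * max (logit g) 0 \<le> 1"
proof -
  assume g: "0 \<le> g" "g \<le> 1"
  show ?thesis
  proof (cases "g = 1")
    case True then show ?thesis by simp
  next
    case False
    then have t: "0 < 1 - g" "1 - g \<le> 1" using g by auto
    have lng: "ln g \<le> 0" using g by (cases "g = 0") auto
    have lnt: "ln (1 - g) \<le> 0" using t by simp
    have "max (logit g) 0 \<le> - min (ln (1 - g)) 0" using lng lnt by (auto simp: logit_def max_def min_def)
    then have "(1 - g) * max (logit g) 0 \<le> (1 - g) * (- min (ln (1 - g)) 0)"
      using t by (intro mult_left_mono) auto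
    also have "\<dots> \<le> 1" using mult_neg_min_ln_le_1[of "1 - g"] t by simp
    finally show ?thesis .
  qed
qed

lemma abs_odds_gap_mult_le:
  fixes g N L lm lp m :: real
  assumes g: "0 \<le> g" "g \<le> 1" and N: "0 \<le> N" "N \<le> 1" and L: "0 \<le> L"
    and lm: "0 \<le> lm" and lp: "0 \<le> lp" "(1 - g) * lp \<le> 1" and m: "- m \<le> lm + lp" "m \<le> 0"
  shows "\<bar>N * (1 - g) * (L * (1 - g) - g) * m\<bar> \<le> N * L * lm + g * lm + N * L + 1"
proof -
  have "\<bar>L * (1 - g) - g\<bar> \<le> L * (1 - g) + g" using g L by (simp add: abs_le_iff)
  moreover have "\<bar>m\<bar> \<le> lm + lp" using m by simp
  ultimately have "\<bar>N * (1 - g) * (L * (1 - g) - g) * m\<bar> \<le> N * (1 - g) * ((L * (1 - g) + g) * (lm + lp))"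
    using g N by (simp add: abs_mult mult.assoc mult_left_mono mult_mono')
  also have "\<dots> = N * L * ((1 - g) * (1 - g)) * lm + N * ((1 - g) * g) * lm
      + N * L * (1 - g) * ((1 - g) * lp) + N * g * ((1 - g) * lp)"
    by (simp add: algebra_simps)
  also have "\<dots> \<le> N * L * lm + g * lm + N * L + 1"
  proof (intro add_mono)
    have p: "0 \<le> 1 - g" "1 - g \<le> 1" using g by auto
    show "N * L * ((1 - g) * (1 - g)) * lm \<le> N * L * lm"
      using p N L lm by (smt (verit) mult_left_le mult_right_mono split_mult_pos_le)
    show "N * ((1 - g) * g) * lm \<le> g * lm"
    proof (rule mult_right_mono[OF _ lm])
      have "N * ((1 - g) * g) \<le> (1 - g) * g" using p g N by (intro mult_left_le_one_le) auto
      also have "\<dots> \<le> g" using p g by (intro mult_left_le_one_le) auto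
      finally show "N * ((1 - g) * g) \<le> g" .
    qed
    show "N * L * (1 - g) * ((1 - g) * lp) \<le> N * L"
      using p N L lp by (smt (verit, best) mult_left_le split_mult_pos_le)
    show "N * g * ((1 - g) * lp) \<le> 1"
      using p N g lp by (metis split_mult_pos_le mult_le_one)
  qed
  finally show ?thesis .
qed

lemma sgn_odds_gap_eq_sgn_log_odds_gap:
  fixes L g :: real
  assumes L: "0 < L" and g: "0 < g" "g < 1"
  shows "(0 < (1-g)*(L*(1-g) - g) \<longleftrightarrow> 0 < ln L - logit g)
       \<and> ((1-g)*(L*(1-g) - g) < 0 \<longleftrightarrow> ln L - logit g < 0)"
proof -
  define q where "q = g / (1 - g)"
  have q: "0 < q" unfolding q_def using g by simp
  have lq: "ln q = logit g" unfolding q_def logit_def using g by (simp add: ln_div)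
  have e: "(1-g)*(L*(1-g) - g) = (1-g)^2 * (L - q)"
    unfolding q_def using g by (simp add: field_simps power2_eq_square)
  have p: "0 < (1-g)^2" using g by simp
  have s1: "0 < (1-g)*(L*(1-g) - g) \<longleftrightarrow> q < L" unfolding e using p by (simp add: zero_less_mult_iff)
  have s2: "(1-g)*(L*(1-g) - g) < 0 \<longleftrightarrow> L < q" unfolding e using p by (simp add: mult_less_0_iff)
  show ?thesis unfolding s1 s2 lq[symmetric] using L q by simp
qed

locale signal_model = prob_space M
  for M :: "'a measure" +
  fixes S :: "'a \<Rightarrow> nat" and V :: "'v set" and W :: "'v \<Rightarrow> 'a \<Rightarrow> 'b"
    and \<mu>0 \<mu>1 :: "'b measure"
  assumes prob_space_\<mu>0: "prob_space \<mu>0" and prob_space_\<mu>1: "prob_space \<mu>1"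
    and sets_\<mu>1: "sets \<mu>1 = sets \<mu>0"
    and \<mu>1_ll_\<mu>0: "absolutely_continuous \<mu>0 \<mu>1" and \<mu>0_ll_\<mu>1: "absolutely_continuous \<mu>1 \<mu>0"
    and finite_V: "finite V"
    and S_measurable[measurable]: "S \<in> measurable M (count_space UNIV)"
    and S_01: "\<And>x. x \<in> space M \<Longrightarrow> S x \<in> {0, 1}"
    and W_measurable[measurable]: "\<And>v. v \<in> V \<Longrightarrow> W v \<in> measurable M \<mu>0"
    and law: "\<And>s A. s \<in> {0, 1} \<Longrightarrow> (\<forall>u\<in>V. A u \<in> sets \<mu>0) \<Longrightarrow>
        measure M {x \<in> space M. S x = s \<and> (\<forall>u\<in>V. W u x \<in> A u)}
          = 1/2 * (\<Prod>u\<in>V. measure (if s = 0 then \<mu>0 else \<mu>1) (A u))"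
begin

definition state_law :: "nat \<Rightarrow> 'b measure" where
  "state_law s = (if s = 0 then \<mu>0 else \<mu>1)"

definition ind_state :: "nat \<Rightarrow> 'a \<Rightarrow> real" where
  "ind_state s x = (if S x = s then 1 else 0)"

definition lr :: "'b \<Rightarrow> real" where
  "lr y = enn2real (RN_deriv \<mu>0 \<mu>1 y)"

definition likelihood :: "'a \<Rightarrow> real" where
  "likelihood x = (\<Prod>u\<in>V. lr (W u x))"

definition signals :: "'a \<Rightarrow> 'v \<Rightarrow> 'b" where
  "signals x = (\<lambda>u\<in>V. W u x)"

definition signal_algebra :: "'a measure" where
  "signal_algebra = sigma (space M) (sigma_signals M V W \<mu>0)"

lemma posterior_eq: "posterior M G S = real_cond_exp M G (ind_state 1)"
  unfolding posterior_def ind_state_def ..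

lemma prob_space_state_law: "prob_space (state_law s)"
  using prob_space_\<mu>0 prob_space_\<mu>1 by (simp add: state_law_def)

lemma sets_state_law[measurable_cong]: "sets (state_law s) = sets \<mu>0"
  using sets_\<mu>1 by (simp add: state_law_def)

lemma ind_state_measurable[measurable]: "ind_state s \<in> borel_measurable M"
  unfolding ind_state_def by measurable

lemma ind_state_0: "x \<in> space M \<Longrightarrow> ind_state 0 x = 1 - ind_state 1 x"
  using S_01 by (auto simp: ind_state_def)

lemma ind_state_nonneg: "0 \<le> ind_state s x" and ind_state_le_1: "ind_state s x \<le> 1"
  by (simp_all add: ind_state_def)

lemma integrable_ind_state_mult:
  assumes [measurable]: "k \<in> borel_measurable M" and bounded: "\<And>x. \<bar>k x\<bar> \<le> c"
  shows "integrable M (\<lambda>x. ind_state s x * k x)"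
  using bounded by (intro integrable_const_bound[where B=c]) (auto simp: abs_mult_le_if_abs_le_1 ind_state_def)

lemma lr_measurable[measurable]: "lr \<in> borel_measurable \<mu>0"
  unfolding lr_def by measurable

lemma lr_nonneg: "0 \<le> lr y"
  by (simp add: lr_def)

lemma density_lr: "\<mu>1 = density \<mu>0 (\<lambda>y. ennreal (lr y))"
proof -
  interpret \<mu>0: prob_space \<mu>0 by (fact prob_space_\<mu>0)
  interpret \<mu>1: prob_space \<mu>1 by (fact prob_space_\<mu>1)
  have "AE y in \<mu>0. RN_deriv \<mu>0 \<mu>1 y \<noteq> \<infinity>"
    using \<mu>0.RN_deriv_finite[OF _ \<mu>1_ll_\<mu>0 sets_\<mu>1] \<mu>1.sigma_finite_measure_axioms by blast
  then have "density \<mu>0 (RN_deriv \<mu>0 \<mu>1) = density \<mu>0 (\<lambda>y. ennreal (lr y))"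
    by (intro density_cong) (auto simp: lr_def ennreal_enn2real_if elim!: AE_mp)
  then show ?thesis using \<mu>0.density_RN_deriv[OF \<mu>1_ll_\<mu>0 sets_\<mu>1] by simp
qed

lemma AE_lr_pos: "AE y in \<mu>0. 0 < lr y"
proof -
  have null: "{y \<in> space \<mu>0. lr y = 0} \<in> sets \<mu>0" by measurable
  have "emeasure \<mu>1 {y \<in> space \<mu>0. lr y = 0}
      = (\<integral>\<^sup>+y. ennreal (lr y) * indicator {y \<in> space \<mu>0. lr y = 0} y \<partial>\<mu>0)"
    using null by (subst density_lr) (simp add: emeasure_density)
  also have "\<dots> = (\<integral>\<^sup>+y. 0 \<partial>\<mu>0)" by (intro nn_integral_cong) (auto simp: indicator_def)
  finally have "emeasure \<mu>1 {y \<in> space \<mu>0. lr y = 0} = 0" by simp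
  then have "{y \<in> space \<mu>0. lr y = 0} \<in> null_sets \<mu>1"
    using null sets_\<mu>1 by (auto intro: null_setsI)
  then have "{y \<in> space \<mu>0. lr y = 0} \<in> null_sets \<mu>0"
    using \<mu>0_ll_\<mu>1 by (auto simp: absolutely_continuous_def)
  then show ?thesis
    by (rule AE_I') (auto simp: less_le lr_nonneg)
qed

lemma likelihood_measurable[measurable]: "likelihood \<in> borel_measurable M"
  unfolding likelihood_def by measurable

lemma likelihood_nonneg: "0 \<le> likelihood x"
  unfolding likelihood_def by (auto intro: prod_nonneg lr_nonneg)

lemma sets_PiM_state_law[measurable_cong]:
  "sets (PiM V (\<lambda>_. state_law s)) = sets (PiM V (\<lambda>_. \<mu>0))"
  by (intro sets_PiM_cong) (auto simp: sets_state_law)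

lemma signals_measurable[measurable]: "signals \<in> measurable M (PiM V (\<lambda>_. \<mu>0))"
  unfolding signals_def by (intro measurable_restrict) auto

lemma nn_integral_ind_state_signals:
  fixes h :: "('v \<Rightarrow> 'b) \<Rightarrow> ennreal"
  assumes s: "s \<in> {0, 1}" and [measurable]: "h \<in> borel_measurable (PiM V (\<lambda>_. \<mu>0))"
  shows "(\<integral>\<^sup>+x. ennreal (ind_state s x) * h (signals x) \<partial>M) = (1/2) * (\<integral>\<^sup>+y. h y \<partial>PiM V (\<lambda>_. state_law s))"
proof -
  define E where "E = {x \<in> space M. S x = s}"
  have [measurable]: "E \<in> sets M" unfolding E_def by measurable
  have [measurable]: "h \<in> borel_measurable (PiM V (\<lambda>_. state_law s))"
    "signals \<in> measurable M (PiM V (\<lambda>_. state_law s))"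
    by (simp_all add: measurable_cong_sets[OF sets_PiM_state_law refl]
        measurable_cong_sets[OF refl sets_PiM_state_law])
  have "distr (density M (\<lambda>x. 2 * indicator E x)) (PiM V (\<lambda>_. state_law s)) signals
      = PiM V (\<lambda>_. state_law s)"
    unfolding signals_def
  proof (rule distr_density_indicator_eq_PiM[OF prob_space_axioms prob_space_state_law finite_V])
    show "\<forall>v\<in>V. W v \<in> M \<rightarrow>\<^sub>M state_law s" by (auto cong: measurable_cong_sets simp: sets_state_law)
    fix A assume "\<forall>u\<in>V. A u \<in> sets (state_law s)"
    then have "\<forall>u\<in>V. A u \<in> sets \<mu>0" by (simp add: sets_state_law)
    moreover have "{x \<in> space M. x \<in> E \<and> (\<forall>u\<in>V. W u x \<in> A u)}
        = {x \<in> space M. S x = s \<and> (\<forall>u\<in>V. W u x \<in> A u)}"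
      by (auto simp: E_def)
    ultimately show "measure M {x \<in> space M. x \<in> E \<and> (\<forall>u\<in>V. W u x \<in> A u)}
        = 1/2 * (\<Prod>u\<in>V. measure (state_law s) (A u))"
      using law[OF s, of A] by (simp add: state_law_def)
  qed (simp add: E_def)
  then have "(\<integral>\<^sup>+y. h y \<partial>PiM V (\<lambda>_. state_law s))
      = (\<integral>\<^sup>+y. h y \<partial>distr (density M (\<lambda>x. 2 * indicator E x)) (PiM V (\<lambda>_. state_law s)) signals)"
    by simp
  also have "\<dots> = (\<integral>\<^sup>+x. h (signals x) \<partial>density M (\<lambda>x. 2 * indicator E x))"
    by (rule nn_integral_distr) auto
  also have "\<dots> = (\<integral>\<^sup>+x. 2 * (ennreal (ind_state s x) * h (signals x)) \<partial>M)"
    by (subst nn_integral_density)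
       (auto intro!: nn_integral_cong simp: E_def ind_state_def indicator_def)
  also have "\<dots> = 2 * (\<integral>\<^sup>+x. ennreal (ind_state s x) * h (signals x) \<partial>M)"
    by (rule nn_integral_cmult) measurable
  finally have "(\<integral>\<^sup>+y. h y \<partial>PiM V (\<lambda>_. state_law s))
      = 2 * (\<integral>\<^sup>+x. ennreal (ind_state s x) * h (signals x) \<partial>M)" .
  moreover have "(1/2) * (2::ennreal) = 1" by (simp add: ennreal_divide_times)
  ultimately show ?thesis by (metis mult.assoc mult_1)
qed

lemma nn_integral_ind_state_signal:
  fixes f :: "'b \<Rightarrow> ennreal"
  assumes s: "s \<in> {0, 1}" and u: "u \<in> V" and [measurable]: "f \<in> borel_measurable \<mu>0"
  shows "(\<integral>\<^sup>+x. ennreal (ind_state s x) * f (W u x) \<partial>M) = (1/2) * (\<integral>\<^sup>+y. f y \<partial>state_law s)"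
proof -
  have [measurable]: "f \<in> borel_measurable (state_law s)"
    by (simp add: measurable_cong_sets[OF sets_state_law refl])
  have "(\<integral>\<^sup>+x. ennreal (ind_state s x) * f (W u x) \<partial>M)
      = (\<integral>\<^sup>+x. ennreal (ind_state s x) * f (signals x u) \<partial>M)"
    using u by (simp add: signals_def)
  also have "\<dots> = (1/2) * (\<integral>\<^sup>+y. f (y u) \<partial>PiM V (\<lambda>_. state_law s))"
    using u by (intro nn_integral_ind_state_signals s) measurable
  also have "(\<integral>\<^sup>+y. f (y u) \<partial>PiM V (\<lambda>_. state_law s))
      = (\<integral>\<^sup>+y. f y \<partial>distr (PiM V (\<lambda>_. state_law s)) (state_law s) (\<lambda>y. y u))"
    using u by (subst nn_integral_distr) auto
  also have "\<dots> = (\<integral>\<^sup>+y. f y \<partial>state_law s)"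
    using u prob_space_state_law by (subst distr_PiM_component) auto
  finally show ?thesis .
qed

lemma AE_lr_signal_pos: "AE x in M. S x = 0 \<longrightarrow> (\<forall>u\<in>V. 0 < lr (W u x))"
proof -
  have "AE x in M. S x = 0 \<longrightarrow> 0 < lr (W u x)" if u: "u \<in> V" for u
  proof -
    have "(\<integral>\<^sup>+x. ennreal (ind_state 0 x) * indicator {y. lr y \<le> 0} (W u x) \<partial>M)
        = (1/2) * (\<integral>\<^sup>+y. indicator {y. lr y \<le> 0} y \<partial>\<mu>0)"
      using u by (subst nn_integral_ind_state_signal) (auto simp: state_law_def)
    also have "(\<integral>\<^sup>+y. indicator {y. lr y \<le> 0} y \<partial>\<mu>0) = 0"
      using AE_lr_pos by (subst nn_integral_0_iff_AE) (auto simp: indicator_def)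
    finally have "(\<integral>\<^sup>+x. ennreal (ind_state 0 x) * indicator {y. lr y \<le> 0} (W u x) \<partial>M) = 0"
      by simp
    then have "AE x in M. ennreal (ind_state 0 x) * indicator {y. lr y \<le> 0} (W u x) = 0"
      using u by (subst (asm) nn_integral_0_iff_AE) auto
    then show ?thesis by eventually_elim (auto simp: ind_state_def indicator_def)
  qed
  then have "AE x in M. \<forall>u\<in>V. S x = 0 \<longrightarrow> 0 < lr (W u x)"
    by (intro eventually_ball_finite[OF finite_V]) auto
  then show ?thesis by eventually_elim auto
qed

subsection \<open>Change of measure on the signal algebra\<close>

lemma nn_integral_ind1_comp_signals:
  fixes h :: "('v \<Rightarrow> 'b) \<Rightarrow> ennreal"
  assumes [measurable]: "h \<in> borel_measurable (PiM V (\<lambda>_. \<mu>0))"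
  shows "(\<integral>\<^sup>+x. ennreal (ind_state 1 x) * h (signals x) \<partial>M)
    = (\<integral>\<^sup>+x. ennreal (ind_state 0 x * likelihood x) * h (signals x) \<partial>M)"
proof -
  have "(\<integral>\<^sup>+x. ennreal (ind_state 1 x) * h (signals x) \<partial>M) = (1/2) * (\<integral>\<^sup>+y. h y \<partial>PiM V (\<lambda>_. \<mu>1))"
    using nn_integral_ind_state_signals[of 1 h] by (simp add: state_law_def)
  also have "\<dots> = (1/2) * (\<integral>\<^sup>+y. (\<Prod>u\<in>V. ennreal (lr (y u))) * h y \<partial>PiM V (\<lambda>_. \<mu>0))"
    by (simp add: PiM_density_prod[OF prob_space_\<mu>0 prob_space_\<mu>1 finite_V lr_measurable density_lr]
        nn_integral_density)
  also have "\<dots> = (\<integral>\<^sup>+x. ennreal (ind_state 0 x) * ((\<Prod>u\<in>V. ennreal (lr (signals x u))) * h (signals x)) \<partial>M)"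
    by (subst nn_integral_ind_state_signals) (auto simp: state_law_def)
  also have "\<dots> = (\<integral>\<^sup>+x. ennreal (ind_state 0 x * likelihood x) * h (signals x) \<partial>M)"
    by (intro nn_integral_cong)
       (simp add: likelihood_def signals_def prod_ennreal lr_nonneg ennreal_mult' ind_state_nonneg mult.assoc)
  finally show ?thesis .
qed

lemma sigma_signals_eq: "sigma_signals M V W \<mu>0 = {signals -` B \<inter> space M | B. B \<in> sets (PiM V (\<lambda>_. \<mu>0))}"
  unfolding signals_def by (rule sigma_signals_eq_vimage_PiM) simp

lemma sets_signal_algebra: "sets signal_algebra = sigma_signals M V W \<mu>0"
proof -
  have "sigma_signals M V W \<mu>0 \<subseteq> sets M"
    unfolding sigma_signals_eq by (auto intro: measurable_sets)
  then have "sets signal_algebra = sigma_sets (space M) (sigma_signals M V W \<mu>0)"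
    unfolding signal_algebra_def using sets.sets_into_space by (intro sets_measure_of) auto
  also have "\<dots> = sigma_signals M V W \<mu>0"
    unfolding sigma_signals_def by (rule sigma_sets_sigma_sets_eq) auto
  finally show ?thesis .
qed

lemma space_signal_algebra: "space signal_algebra = space M"
  by (simp add: signal_algebra_def space_measure_of_conv)

lemma subalgebra_signal_algebra: "subalgebra M signal_algebra"
  unfolding subalgebra_def sets_signal_algebra sigma_signals_eq space_signal_algebra
  by (auto intro: measurable_sets)

lemma W_measurable_signal_algebra[measurable]:
  assumes u: "u \<in> V" shows "W u \<in> measurable signal_algebra \<mu>0"
proof (rule measurableI)
  show "W u x \<in> space \<mu>0" if "x \<in> space signal_algebra" for x
    using that u measurable_space[OF W_measurable] by (auto simp: space_signal_algebra)
  show "W u -` A \<inter> space signal_algebra \<in> sets signal_algebra" if "A \<in> sets \<mu>0" for A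
    unfolding sets_signal_algebra sigma_signals_def space_signal_algebra
    using that u by (intro sigma_sets.Basic) auto
qed

lemma measurable_signal_algebraD:
  "f \<in> measurable signal_algebra N \<Longrightarrow> f \<in> measurable M N"
  using measurable_from_subalg[OF subalgebra_signal_algebra] by blast

lemma restr_density_ind1_eq_likelihood:
  "restr_to_subalg (density M (\<lambda>x. ennreal (ind_state 1 x))) signal_algebra
    = restr_to_subalg (density M (\<lambda>x. ennreal (ind_state 0 x * likelihood x))) signal_algebra"
  (is "restr_to_subalg ?Q1 _ = restr_to_subalg ?Q0 _")
proof (rule measure_eqI)
  have sub1: "subalgebra ?Q1 signal_algebra" and sub0: "subalgebra ?Q0 signal_algebra"
    using subalgebra_signal_algebra by (auto simp: subalgebra_def)
  then show "sets (restr_to_subalg ?Q1 signal_algebra) = sets (restr_to_subalg ?Q0 signal_algebra)"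
    by (simp add: sets_restr_to_subalg)
  fix A assume "A \<in> sets (restr_to_subalg ?Q1 signal_algebra)"
  then have A: "A \<in> sets signal_algebra" using sets_restr_to_subalg[OF sub1] by simp
  then obtain B where B: "B \<in> sets (PiM V (\<lambda>_. \<mu>0))" "A = signals -` B \<inter> space M"
    by (auto simp: sets_signal_algebra sigma_signals_eq)
  have "A \<in> sets M" using A subalgebra_signal_algebra by (auto simp: subalgebra_def)
  have "emeasure (restr_to_subalg ?Q1 signal_algebra) A = emeasure ?Q1 A"
    by (rule emeasure_restr_to_subalg[OF sub1 A])
  also have "\<dots> = (\<integral>\<^sup>+x. ennreal (ind_state 1 x) * indicator B (signals x) \<partial>M)"
    using \<open>A \<in> sets M\<close> B(2) by (auto simp: emeasure_density indicator_def intro!: nn_integral_cong)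
  also have "\<dots> = (\<integral>\<^sup>+x. ennreal (ind_state 0 x * likelihood x) * indicator B (signals x) \<partial>M)"
    using B(1) by (intro nn_integral_ind1_comp_signals) simp
  also have "\<dots> = emeasure ?Q0 A"
    using \<open>A \<in> sets M\<close> B(2) by (auto simp: emeasure_density indicator_def intro!: nn_integral_cong)
  also have "\<dots> = emeasure (restr_to_subalg ?Q0 signal_algebra) A"
    by (rule emeasure_restr_to_subalg[OF sub0 A, symmetric])
  finally show "emeasure (restr_to_subalg ?Q1 signal_algebra) A
      = emeasure (restr_to_subalg ?Q0 signal_algebra) A" .
qed

lemma nn_integral_ind1_signal_algebra:
  fixes f :: "'a \<Rightarrow> ennreal"
  assumes f: "f \<in> borel_measurable signal_algebra"
  shows "(\<integral>\<^sup>+x. ennreal (ind_state 1 x) * f x \<partial>M)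
    = (\<integral>\<^sup>+x. ennreal (ind_state 0 x * likelihood x) * f x \<partial>M)"
proof -
  have [measurable]: "f \<in> borel_measurable M" using measurable_signal_algebraD[OF f] .
  have sub: "subalgebra (density M g) signal_algebra" for g
    using subalgebra_signal_algebra by (auto simp: subalgebra_def)
  have "(\<integral>\<^sup>+x. ennreal (ind_state 1 x) * f x \<partial>M) = (\<integral>\<^sup>+x. f x \<partial>density M (\<lambda>x. ennreal (ind_state 1 x)))"
    by (simp add: nn_integral_density)
  also have "\<dots> = (\<integral>\<^sup>+x. f x \<partial>restr_to_subalg (density M (\<lambda>x. ennreal (ind_state 1 x))) signal_algebra)"
    by (rule nn_integral_subalgebra2[OF sub f, symmetric])
  also have "\<dots> = (\<integral>\<^sup>+x. f x \<partial>density M (\<lambda>x. ennreal (ind_state 0 x * likelihood x)))"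
    unfolding restr_density_ind1_eq_likelihood by (rule nn_integral_subalgebra2[OF sub f])
  also have "\<dots> = (\<integral>\<^sup>+x. ennreal (ind_state 0 x * likelihood x) * f x \<partial>M)"
    by (simp add: nn_integral_density)
  finally show ?thesis .
qed

lemma
  fixes f :: "'a \<Rightarrow> real"
  assumes f: "f \<in> borel_measurable signal_algebra" and bounded: "\<And>x. \<bar>f x\<bar> \<le> c"
  shows integrable_likelihood_signal_algebra: "integrable M (\<lambda>x. ind_state 0 x * likelihood x * f x)"
    and integral_ind1_signal_algebra:
      "(\<integral>x. ind_state 1 x * f x \<partial>M) = (\<integral>x. ind_state 0 x * likelihood x * f x \<partial>M)"
proof -
  have [measurable]: "f \<in> borel_measurable M" using measurable_signal_algebraD[OF f] .
  define Q1 where "Q1 = density M (\<lambda>x. ennreal (ind_state 1 x))"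
  define Q0 where "Q0 = density M (\<lambda>x. ennreal (ind_state 0 x * likelihood x))"
  have sub1: "subalgebra Q1 signal_algebra" and sub0: "subalgebra Q0 signal_algebra"
    using subalgebra_signal_algebra by (auto simp: subalgebra_def Q1_def Q0_def)
  have restr_eq: "restr_to_subalg Q1 signal_algebra = restr_to_subalg Q0 signal_algebra"
    unfolding Q1_def Q0_def by (rule restr_density_ind1_eq_likelihood)
  interpret Q1: finite_measure Q1
  proof
    have "emeasure Q1 (space Q1) = (\<integral>\<^sup>+x. ennreal (ind_state 1 x) \<partial>M)"
      unfolding Q1_def by (subst emeasure_density) (auto intro!: nn_integral_cong)
    also have "\<dots> \<le> (\<integral>\<^sup>+x. 1 \<partial>M)" by (intro nn_integral_mono) (simp add: ind_state_le_1)
    finally show "emeasure Q1 (space Q1) \<noteq> \<infinity>" by (auto simp: emeasure_space_1 top_unique)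
  qed
  have "integrable Q1 f"
    using bounded by (intro Q1.integrable_const_bound[where B=c]) (auto simp: Q1_def)
  then have "integrable (restr_to_subalg Q0 signal_algebra) f"
    unfolding restr_eq[symmetric] by (rule integrable_in_subalg[OF sub1 f])
  then have "integrable Q0 f" by (rule integrable_from_subalg[OF sub0])
  then show "integrable M (\<lambda>x. ind_state 0 x * likelihood x * f x)"
    unfolding Q0_def by (subst (asm) integrable_density) (auto simp: ind_state_nonneg likelihood_nonneg)
  have "(\<integral>x. ind_state 1 x * f x \<partial>M) = (\<integral>x. f x \<partial>Q1)"
    unfolding Q1_def by (subst integral_density) (auto simp: ind_state_nonneg)
  also have "\<dots> = (\<integral>x. f x \<partial>Q0)"
    by (metis integral_subalgebra2[OF sub1 f] integral_subalgebra2[OF sub0 f] restr_eq)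
  also have "\<dots> = (\<integral>x. ind_state 0 x * likelihood x * f x \<partial>M)"
    unfolding Q0_def by (subst integral_density) (auto simp: ind_state_nonneg likelihood_nonneg)
  finally show "(\<integral>x. ind_state 1 x * f x \<partial>M) = (\<integral>x. ind_state 0 x * likelihood x * f x \<partial>M)" .
qed

lemma integrable_ind0_likelihood: "integrable M (\<lambda>x. ind_state 0 x * likelihood x)"
  using integrable_likelihood_signal_algebra[of "\<lambda>_. 1" 1] by simp

definition neg_log_lr :: "'v \<Rightarrow> 'a \<Rightarrow> real" where
  "neg_log_lr u x = - min (ln (lr (W u x))) 0"

lemma neg_log_lr_nonneg: "0 \<le> neg_log_lr u x"
  by (simp add: neg_log_lr_def)

lemma neg_log_lr_measurable[measurable]: "u \<in> V \<Longrightarrow> neg_log_lr u \<in> borel_measurable signal_algebra"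
  unfolding neg_log_lr_def by measurable

lemma nn_integral_ind1_neg_log_lr_le:
  assumes u: "u \<in> V"
  shows "(\<integral>\<^sup>+x. ennreal (ind_state 1 x) * ennreal (neg_log_lr u x) \<partial>M) \<le> 1"
proof -
  have "(\<integral>\<^sup>+x. ennreal (ind_state 1 x) * ennreal (neg_log_lr u x) \<partial>M)
      = (1/2) * (\<integral>\<^sup>+y. ennreal (- min (ln (lr y)) 0) \<partial>\<mu>1)"
    using u nn_integral_ind_state_signal[of 1 u "\<lambda>y. ennreal (- min (ln (lr y)) 0)"]
    by (simp add: neg_log_lr_def state_law_def)
  also have "\<dots> = (1/2) * (\<integral>\<^sup>+y. ennreal (lr y) * ennreal (- min (ln (lr y)) 0) \<partial>\<mu>0)"
    by (subst density_lr) (simp add: nn_integral_density)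
  also have "\<dots> \<le> (1/2) * (\<integral>\<^sup>+y. 1 \<partial>\<mu>0)"
    using mult_neg_min_ln_le_1[OF lr_nonneg]
    by (intro mult_left_mono nn_integral_mono) (auto simp: ennreal_mult''[symmetric] lr_nonneg)
  also have "\<dots> \<le> 1"
    using prob_space.emeasure_space_1[OF prob_space_\<mu>0] by (simp add: divide_le_posI_ennreal)
  finally show ?thesis .
qed

lemma integrable_ind1_neg_log_lr:
  assumes u: "u \<in> V" shows "integrable M (\<lambda>x. ind_state 1 x * neg_log_lr u x)"
proof (rule integrableI_nonneg)
  have [measurable]: "neg_log_lr u \<in> borel_measurable M"
    using u by (intro measurable_signal_algebraD) measurable
  show "(\<lambda>x. ind_state 1 x * neg_log_lr u x) \<in> borel_measurable M" by measurable
  show "AE x in M. 0 \<le> ind_state 1 x * neg_log_lr u x"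
    by (simp add: ind_state_nonneg neg_log_lr_nonneg)
  show "(\<integral>\<^sup>+x. ennreal (ind_state 1 x * neg_log_lr u x) \<partial>M) < \<infinity>"
    using nn_integral_ind1_neg_log_lr_le[OF u]
    by (simp add: ennreal_mult ind_state_nonneg neg_log_lr_nonneg le_less_trans)
qed

lemma integrable_likelihood_neg_log_lr:
  assumes u: "u \<in> V" shows "integrable M (\<lambda>x. ind_state 0 x * likelihood x * neg_log_lr u x)"
proof (rule integrableI_nonneg)
  have [measurable]: "neg_log_lr u \<in> borel_measurable M"
    using u by (intro measurable_signal_algebraD) measurable
  show "(\<lambda>x. ind_state 0 x * likelihood x * neg_log_lr u x) \<in> borel_measurable M" by measurable
  show "AE x in M. 0 \<le> ind_state 0 x * likelihood x * neg_log_lr u x"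
    by (simp add: ind_state_nonneg likelihood_nonneg neg_log_lr_nonneg)
  have "(\<integral>\<^sup>+x. ennreal (ind_state 0 x * likelihood x * neg_log_lr u x) \<partial>M)
      = (\<integral>\<^sup>+x. ennreal (ind_state 1 x) * ennreal (neg_log_lr u x) \<partial>M)"
    using u by (subst nn_integral_ind1_signal_algebra)
      (auto simp: ennreal_mult ind_state_nonneg likelihood_nonneg neg_log_lr_nonneg)
  then show "(\<integral>\<^sup>+x. ennreal (ind_state 0 x * likelihood x * neg_log_lr u x) \<partial>M) < \<infinity>"
    using nn_integral_ind1_neg_log_lr_le[OF u] by (simp add: le_less_trans)
qed

end

locale common_belief = signal_model M S V W \<mu>0 \<mu>1
  for M :: "'a measure" and S V and W :: "'v \<Rightarrow> 'a \<Rightarrow> 'b" and \<mu>0 \<mu>1 +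
  fixes F :: "'v \<Rightarrow> 'a measure" and B :: "'a \<Rightarrow> real"
  assumes V_nonempty: "V \<noteq> {}"
    and subalgebra_F: "\<And>u. u \<in> V \<Longrightarrow> subalgebra M (F u)"
    and sets_W_F: "\<And>u. u \<in> V \<Longrightarrow> sets (vimage_algebra (space M) (W u) \<mu>0) \<subseteq> sets (F u)"
    and sets_F_signals: "\<And>u. u \<in> V \<Longrightarrow> sets (F u) \<subseteq> sigma_signals M V W \<mu>0"
    and B_measurable[measurable]: "B \<in> borel_measurable M"
    and B_posterior: "AE x in M. \<forall>u\<in>V. B x = posterior M (F u) S x"
    and B_known: "\<And>u. u \<in> V \<Longrightarrow> \<exists>g\<in>borel_measurable (F u). AE x in M. B x = g x"
begin

lemma measurable_F_signal_algebra:
  assumes u: "u \<in> V" and f: "f \<in> measurable (F u) N"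
  shows "f \<in> measurable signal_algebra N"
proof -
  have "subalgebra signal_algebra (F u)"
    using subalgebra_F[OF u] sets_F_signals[OF u]
    by (auto simp: subalgebra_def sets_signal_algebra space_signal_algebra)
  then show ?thesis using measurable_from_subalg f by blast
qed

lemma measurable_FD: "u \<in> V \<Longrightarrow> f \<in> measurable (F u) N \<Longrightarrow> f \<in> measurable M N"
  by (intro measurable_signal_algebraD measurable_F_signal_algebra)

lemma W_measurable_F[measurable]:
  assumes u: "u \<in> V" shows "W u \<in> measurable (F u) \<mu>0"
proof -
  have "W u \<in> space M \<rightarrow> space \<mu>0" using measurable_space[OF W_measurable[OF u]] by auto
  moreover have "subalgebra (F u) (vimage_algebra (space M) (W u) \<mu>0)"
    using sets_W_F[OF u] subalgebra_F[OF u] by (auto simp: subalgebra_def)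
  ultimately show ?thesis using measurable_from_subalg measurable_vimage_algebra1 by blast
qed

lemma AE_B_01: "AE x in M. 0 \<le> B x \<and> B x \<le> 1"
proof -
  obtain u where u: "u \<in> V" using V_nonempty by auto
  interpret F: finite_measure_subalgebra M "F u"
    using subalgebra_F[OF u] by unfold_locales (auto simp: subalgebra_def)
  have "AE x in M. 0 \<le> real_cond_exp M (F u) (ind_state 1) x"
    by (rule F.real_cond_exp_pos) (auto simp: ind_state_nonneg)
  moreover have "AE x in M. real_cond_exp M (F u) (ind_state 1) x \<le> 1"
    by (rule F.real_cond_exp_le_c) (auto simp: ind_state_le_1 integrable_const_bound[where B=1] ind_state_nonneg)
  ultimately show ?thesis
    using B_posterior by eventually_elim (use u in \<open>auto simp: posterior_eq\<close>)
qed

definition belief :: "'v \<Rightarrow> 'a \<Rightarrow> real" where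
  "belief u x = max 0 (min 1 ((SOME g. g \<in> borel_measurable (F u) \<and> (AE x in M. B x = g x)) x))"

lemma
  assumes u: "u \<in> V"
  shows belief_measurable[measurable]: "belief u \<in> borel_measurable (F u)"
    and AE_B_eq_belief: "AE x in M. B x = belief u x"
proof -
  let ?g = "SOME g. g \<in> borel_measurable (F u) \<and> (AE x in M. B x = g x)"
  have g: "?g \<in> borel_measurable (F u)" "AE x in M. B x = ?g x"
    using someI_ex[OF B_known[OF u, unfolded Bex_def]] by blast+
  show "belief u \<in> borel_measurable (F u)" unfolding belief_def using g(1) by measurable
  show "AE x in M. B x = belief u x"
    using g(2) AE_B_01 by eventually_elim (auto simp: belief_def)
qed

lemma belief_nonneg: "0 \<le> belief u x" and belief_le_1: "belief u x \<le> 1"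
  by (simp_all add: belief_def)

lemma belief_measurable_M[measurable]: "u \<in> V \<Longrightarrow> belief u \<in> borel_measurable M"
  by (rule measurable_FD) measurable

lemma
  assumes u: "u \<in> V" and k[measurable]: "k \<in> borel_measurable (F u)"
    and int: "integrable M (\<lambda>x. ind_state 1 x * k x)"
  shows integrable_belief_mult_F: "integrable M (\<lambda>x. belief u x * k x)"
    and integral_ind1_mult_F: "(\<integral>x. ind_state 1 x * k x \<partial>M) = (\<integral>x. belief u x * k x \<partial>M)"
proof -
  interpret F: finite_measure_subalgebra M "F u"
    using subalgebra_F[OF u] by unfold_locales (auto simp: subalgebra_def)
  have [measurable]: "k \<in> borel_measurable M" using measurable_FD[OF u k] .
  have "integrable M (\<lambda>x. k x * ind_state 1 x)" using int by (simp add: mult.commute)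
  note cond_exp = F.real_cond_exp_intg[OF this k ind_state_measurable]
  have ae: "AE x in M. k x * real_cond_exp M (F u) (ind_state 1) x = belief u x * k x"
    using B_posterior AE_B_eq_belief[OF u]
    by eventually_elim (use u in \<open>auto simp: posterior_eq\<close>)
  show "integrable M (\<lambda>x. belief u x * k x)"
    using cond_exp(1) u by (subst integrable_cong_AE[OF _ _ ae, symmetric]) auto
  show "(\<integral>x. ind_state 1 x * k x \<partial>M) = (\<integral>x. belief u x * k x \<partial>M)"
    using cond_exp(2) u by (subst integral_cong_AE[OF _ _ ae, symmetric]) (auto simp: mult.commute)
qed

lemma integral_ind0_mult_F:
  assumes u: "u \<in> V" and k[measurable]: "k \<in> borel_measurable (F u)" and bounded: "\<And>x. \<bar>k x\<bar> \<le> c"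
  shows "(\<integral>x. ind_state 0 x * k x \<partial>M) = (\<integral>x. (1 - belief u x) * k x \<partial>M)"
proof -
  have [measurable]: "k \<in> borel_measurable M" using measurable_FD[OF u k] .
  have int_k: "integrable M k" using bounded by (intro integrable_const_bound[where B=c]) auto
  have int_ind1: "integrable M (\<lambda>x. ind_state 1 x * k x)"
    using bounded by (rule integrable_ind_state_mult[rotated]) measurable
  have "(\<integral>x. ind_state 0 x * k x \<partial>M) = (\<integral>x. k x - ind_state 1 x * k x \<partial>M)"
    by (intro Bochner_Integration.integral_cong) (auto simp: ind_state_0 algebra_simps)
  also have "\<dots> = (\<integral>x. k x \<partial>M) - (\<integral>x. belief u x * k x \<partial>M)"
    using int_k int_ind1 integral_ind1_mult_F[OF u k int_ind1] by simp
  also have "\<dots> = (\<integral>x. (1 - belief u x) * k x \<partial>M)"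
    using int_k integrable_belief_mult_F[OF u k int_ind1] by (simp add: left_diff_distrib)
  finally show ?thesis .
qed

text \<open>Splitting logit B evenly among the agents keeps every summand known to its agent while
  the sum over all agents is ln L - logit B.\<close>
definition evidence_excess :: "'v \<Rightarrow> 'a \<Rightarrow> real" where
  "evidence_excess u x = ln (lr (W u x)) - logit (belief u x) / card V"

text \<open>On S = 0 the defect is (1-B)^2 (L - B/(1-B)): it vanishes exactly where B is the
  full-information posterior L/(1+L).\<close>
definition defect :: "'a \<Rightarrow> real" where
  "defect x = ind_state 0 x * (1 - B x) * (likelihood x * (1 - B x) - B x)"

lemma evidence_excess_measurable[measurable]:
  assumes u: "u \<in> V" shows "evidence_excess u \<in> borel_measurable (F u)"
proof -
  have [measurable]: "W u \<in> measurable (F u) \<mu>0" "belief u \<in> borel_measurable (F u)"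
    using u by (rule W_measurable_F, rule belief_measurable)
  show ?thesis unfolding evidence_excess_def logit_def by measurable
qed

lemma defect_measurable[measurable]: "defect \<in> borel_measurable M"
  unfolding defect_def by measurable

lemma orthogonal_to_bounded_defect:
  assumes u: "u \<in> V" shows "orthogonal_to_bounded M defect (evidence_excess u)"
  unfolding orthogonal_to_bounded_def
proof (intro allI impI)
  fix \<phi> :: "real \<Rightarrow> real" and c :: real
  assume [measurable]: "\<phi> \<in> borel_measurable borel" and "\<forall>t. \<bar>\<phi> t\<bar> \<le> c"
  then have bounded: "\<bar>\<phi> t\<bar> \<le> c" for t by blast
  define k1 where "k1 x = (1 - belief u x) * (1 - belief u x) * \<phi> (evidence_excess u x)" for x
  define k0 where "k0 x = (1 - belief u x) * belief u x * \<phi> (evidence_excess u x)" for x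
  have \<phi>_F: "(\<lambda>x. \<phi> (evidence_excess u x)) \<in> borel_measurable (F u)"
    using evidence_excess_measurable[OF u] by (rule measurable_compose) fact
  have [measurable]: "(\<lambda>x. \<phi> (evidence_excess u x)) \<in> borel_measurable M"
    by (rule measurable_FD[OF u \<phi>_F])
  from \<phi>_F have k1F: "k1 \<in> borel_measurable (F u)" and k0F: "k0 \<in> borel_measurable (F u)"
    unfolding k1_def k0_def using belief_measurable[OF u]
    by (auto intro!: borel_measurable_times borel_measurable_diff)
  have [measurable]: "k1 \<in> borel_measurable M" "k0 \<in> borel_measurable M"
    by (rule measurable_FD[OF u k1F], rule measurable_FD[OF u k0F])
  have k1_bounded: "\<bar>k1 x\<bar> \<le> c" and k0_bounded: "\<bar>k0 x\<bar> \<le> c" for x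
  proof -
    have "\<bar>(1 - belief u x) * (1 - belief u x)\<bar> \<le> 1" "\<bar>(1 - belief u x) * belief u x\<bar> \<le> 1"
      using belief_nonneg[of u x] belief_le_1[of u x] by (auto simp: abs_mult mult_le_one)
    then show "\<bar>k1 x\<bar> \<le> c" "\<bar>k0 x\<bar> \<le> c"
      unfolding k1_def k0_def by (auto intro: abs_mult_le_if_abs_le_1 bounded)
  qed
  have k1_signals: "k1 \<in> borel_measurable signal_algebra" by (rule measurable_F_signal_algebra[OF u k1F])
  have int_ind1_k1: "integrable M (\<lambda>x. ind_state 1 x * k1 x)"
    using k1_bounded by (rule integrable_ind_state_mult[rotated]) measurable
  have int_ind0_k0: "integrable M (\<lambda>x. ind_state 0 x * k0 x)"
    using k0_bounded by (rule integrable_ind_state_mult[rotated]) measurable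
  have "AE x in M. defect x * \<phi> (evidence_excess u x)
      = ind_state 0 x * likelihood x * k1 x - ind_state 0 x * k0 x"
    using AE_B_eq_belief[OF u] by eventually_elim (simp add: defect_def k1_def k0_def algebra_simps)
  then have "(\<integral>x. defect x * \<phi> (evidence_excess u x) \<partial>M)
      = (\<integral>x. ind_state 0 x * likelihood x * k1 x - ind_state 0 x * k0 x \<partial>M)"
    using u by (intro integral_cong_AE) auto
  also have "\<dots> = (\<integral>x. ind_state 1 x * k1 x \<partial>M) - (\<integral>x. ind_state 0 x * k0 x \<partial>M)"
    using integrable_likelihood_signal_algebra[OF k1_signals k1_bounded] int_ind0_k0
      integral_ind1_signal_algebra[OF k1_signals k1_bounded] by simp
  also have "\<dots> = (\<integral>x. belief u x * k1 x \<partial>M) - (\<integral>x. (1 - belief u x) * k0 x \<partial>M)"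
    using integral_ind1_mult_F[OF u k1F int_ind1_k1] integral_ind0_mult_F[OF u k0F k0_bounded] by simp
  also have "\<dots> = 0" by (simp add: k1_def k0_def algebra_simps)
  finally show "(\<integral>x. defect x * \<phi> (evidence_excess u x) \<partial>M) = 0" .
qed

subsection \<open>The defect vanishes\<close>

lemma AE_B_lt_1: "AE x in M. S x = 0 \<longrightarrow> B x < 1"
proof -
  obtain u where u: "u \<in> V" using V_nonempty by auto
  define k where "k x = (if belief u x = 1 then 1 else 0 :: real)" for x
  have kF: "k \<in> borel_measurable (F u)" unfolding k_def using belief_measurable[OF u] by measurable
  have [measurable]: "k \<in> borel_measurable M" by (rule measurable_FD[OF u kF])
  have k_bounded: "\<bar>k x\<bar> \<le> 1" for x by (simp add: k_def)
  have "(\<integral>x. ind_state 0 x * k x \<partial>M) = (\<integral>x. (1 - belief u x) * k x \<partial>M)"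
    by (rule integral_ind0_mult_F[OF u kF k_bounded])
  also have "(\<lambda>x. (1 - belief u x) * k x) = (\<lambda>_. 0)" by (simp add: k_def fun_eq_iff)
  finally have "(\<integral>x. ind_state 0 x * k x \<partial>M) = 0" by simp
  moreover have "integrable M (\<lambda>x. ind_state 0 x * k x)"
    by (rule integrable_ind_state_mult[OF _ k_bounded]) measurable
  ultimately have "AE x in M. ind_state 0 x * k x = 0"
    by (subst (asm) integral_nonneg_eq_0_iff_AE) (auto simp: ind_state_nonneg k_def)
  then show ?thesis
    using AE_B_eq_belief[OF u] by eventually_elim
      (use belief_le_1[of u] in \<open>force simp: ind_state_def k_def order_le_less split: if_splits\<close>)
qed

lemma AE_likelihood_eq_0_if_B_eq_0: "AE x in M. S x = 0 \<longrightarrow> B x = 0 \<longrightarrow> likelihood x = 0"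
proof -
  obtain u where u: "u \<in> V" using V_nonempty by auto
  define k where "k x = (if belief u x = 0 then 1 else 0 :: real)" for x
  have kF: "k \<in> borel_measurable (F u)" unfolding k_def using belief_measurable[OF u] by measurable
  have [measurable]: "k \<in> borel_measurable M" by (rule measurable_FD[OF u kF])
  have k_signals: "k \<in> borel_measurable signal_algebra" by (rule measurable_F_signal_algebra[OF u kF])
  have k_bounded: "\<bar>k x\<bar> \<le> 1" for x by (simp add: k_def)
  have "(\<integral>x. ind_state 0 x * likelihood x * k x \<partial>M) = (\<integral>x. ind_state 1 x * k x \<partial>M)"
    using integral_ind1_signal_algebra[OF k_signals k_bounded] by simp
  also have "\<dots> = (\<integral>x. belief u x * k x \<partial>M)"
    by (rule integral_ind1_mult_F[OF u kF integrable_ind_state_mult[OF _ k_bounded]]) measurable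
  also have "(\<lambda>x. belief u x * k x) = (\<lambda>_. 0)" by (simp add: k_def fun_eq_iff)
  finally have "(\<integral>x. ind_state 0 x * likelihood x * k x \<partial>M) = 0" by simp
  with integrable_likelihood_signal_algebra[OF k_signals k_bounded]
  have "AE x in M. ind_state 0 x * likelihood x * k x = 0"
    by (subst (asm) integral_nonneg_eq_0_iff_AE) (auto simp: ind_state_nonneg likelihood_nonneg k_def)
  then show ?thesis
    using AE_B_eq_belief[OF u] by eventually_elim (auto simp: ind_state_def k_def)
qed

lemma integrable_defect: "integrable M defect"
proof (rule Bochner_Integration.integrable_bound)
  show "integrable M (\<lambda>x. 2 * (ind_state 0 x * likelihood x) + 2)"
    using integrable_ind0_likelihood by auto
  show "AE x in M. norm (defect x) \<le> norm (2 * (ind_state 0 x * likelihood x) + 2)"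
    using AE_B_01
  proof eventually_elim
    case (elim x)
    have "\<bar>defect x * (-1)\<bar> \<le> ind_state 0 x * likelihood x * 1 + B x * 1 + ind_state 0 x * likelihood x + 1"
      unfolding defect_def using elim
      by (intro abs_odds_gap_mult_le[where lm=1 and lp=0]) (auto simp: ind_state_nonneg ind_state_le_1 likelihood_nonneg)
    then show ?case using elim ind_state_nonneg[of 0 x] likelihood_nonneg[of x] by simp
  qed
qed simp

lemma neg_log_lr_measurable_F: "u \<in> V \<Longrightarrow> neg_log_lr u \<in> borel_measurable (F u)"
  unfolding neg_log_lr_def by (rule measurable_compose[OF W_measurable_F]) measurable

lemma integrable_belief_neg_log_lr: "u \<in> V \<Longrightarrow> integrable M (\<lambda>x. belief u x * neg_log_lr u x)"
  by (rule integrable_belief_mult_F[OF _ neg_log_lr_measurable_F integrable_ind1_neg_log_lr])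

lemma neg_part_evidence_excess_le:
  assumes u: "u \<in> V"
  shows "- min (evidence_excess u x) 0 \<le> neg_log_lr u x + max (logit (belief u x)) 0"
proof -
  have n: "1 \<le> real (card V)" using u finite_V by (auto simp: Suc_le_eq card_gt_0_iff)
  have "logit (belief u x) / card V \<le> max (logit (belief u x)) 0"
  proof (cases "0 \<le> logit (belief u x)")
    case True
    then show ?thesis using n by (simp add: divide_le_eq mult_le_cancel_left1)
  next
    case False
    then show ?thesis using n by (simp add: divide_nonpos_pos)
  qed
  then show ?thesis unfolding evidence_excess_def neg_log_lr_def by linarith
qed

lemma integrable_defect_mult_neg_part:
  assumes u: "u \<in> V"
  shows "integrable M (\<lambda>x. defect x * min (evidence_excess u x) 0)"
proof (rule Bochner_Integration.integrable_bound)
  have [measurable]: "neg_log_lr u \<in> borel_measurable M" "evidence_excess u \<in> borel_measurable M"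
    using u by (auto intro: measurable_FD neg_log_lr_measurable_F evidence_excess_measurable)
  let ?bound = "\<lambda>x. ind_state 0 x * likelihood x * neg_log_lr u x + belief u x * neg_log_lr u x
    + ind_state 0 x * likelihood x + 1"
  show "(\<lambda>x. defect x * min (evidence_excess u x) 0) \<in> borel_measurable M" by measurable
  show "integrable M ?bound"
    using integrable_likelihood_neg_log_lr[OF u] integrable_belief_neg_log_lr[OF u] integrable_ind0_likelihood
    by auto
  show "AE x in M. norm (defect x * min (evidence_excess u x) 0) \<le> norm (?bound x)"
    using AE_B_01 AE_B_eq_belief[OF u]
  proof eventually_elim
    case (elim x)
    have "\<bar>defect x * min (evidence_excess u x) 0\<bar> \<le> ?bound x"
      unfolding defect_def \<open>B x = belief u x\<close>
      using neg_part_evidence_excess_le[OF u, of x] belief_nonneg[of u x] belief_le_1[of u x]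
        mult_pos_part_logit_le_1[of "belief u x"]
      by (intro abs_odds_gap_mult_le[where lp="max (logit (belief u x)) 0"])
         (auto simp: ind_state_nonneg ind_state_le_1 likelihood_nonneg neg_log_lr_nonneg)
    moreover have "0 \<le> ?bound x"
      using elim by (auto simp: ind_state_nonneg likelihood_nonneg neg_log_lr_nonneg)
    ultimately show ?case by simp
  qed
qed

lemma sum_evidence_excess:
  assumes lr_pos: "\<forall>u\<in>V. 0 < lr (W u x)" and agree: "\<forall>u\<in>V. B x = belief u x"
  shows "(\<Sum>u\<in>V. evidence_excess u x) = ln (likelihood x) - logit (B x)"
proof -
  have "(\<Sum>u\<in>V. evidence_excess u x) = (\<Sum>u\<in>V. ln (lr (W u x))) - (\<Sum>u\<in>V. logit (B x) / card V)"
    using agree by (simp add: evidence_excess_def sum_subtractf)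
  also have "(\<Sum>u\<in>V. ln (lr (W u x))) = ln (likelihood x)"
    unfolding likelihood_def using lr_pos finite_V by (subst ln_prod) auto
  also have "(\<Sum>u\<in>V. logit (B x) / card V) = logit (B x)"
    using finite_V V_nonempty by simp
  finally show ?thesis .
qed

lemma AE_sgn_defect:
  "AE x in M. (0 < defect x \<longrightarrow> 0 < (\<Sum>u\<in>V. evidence_excess u x))
    \<and> (defect x < 0 \<longrightarrow> (\<Sum>u\<in>V. evidence_excess u x) < 0)"
proof -
  have "AE x in M. \<forall>u\<in>V. B x = belief u x"
    using AE_B_eq_belief by (intro eventually_ball_finite[OF finite_V]) auto
  with AE_lr_signal_pos AE_B_lt_1 AE_likelihood_eq_0_if_B_eq_0 AE_B_01 show ?thesis
  proof eventually_elim
    case (elim x)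
    show ?case
    proof (cases "S x = 0")
      case False
      then show ?thesis by (simp add: defect_def ind_state_def)
    next
      case True
      have L: "0 < likelihood x" unfolding likelihood_def using elim True by (intro prod_pos) auto
      have B: "0 < B x" "B x < 1" using elim True L by (auto simp: order_le_less)
      have "defect x = (1 - B x) * (likelihood x * (1 - B x) - B x)"
        using True by (simp add: defect_def ind_state_def)
      then show ?thesis
        using sgn_odds_gap_eq_sgn_log_odds_gap[OF L B] sum_evidence_excess[of x] elim True by simp
    qed
  qed
qed

lemma AE_defect_eq_0: "AE x in M. defect x = 0"
proof (rule AE_eq_0_if_orthogonal_to_summands[OF finite_V _ integrable_defect])
  show "evidence_excess u \<in> borel_measurable M" if "u \<in> V" for u
    by (rule measurable_FD[OF that evidence_excess_measurable[OF that]])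
qed (use orthogonal_to_bounded_defect integrable_defect_mult_neg_part AE_sgn_defect in auto)

lemma AE_B_eq_likelihood_odds: "AE x in M. S x = 0 \<longrightarrow> B x * (1 + likelihood x) = likelihood x"
  using AE_defect_eq_0 AE_B_lt_1
proof eventually_elim
  case (elim x)
  show ?case
  proof
    assume "S x = 0"
    then have "(1 - B x) * (likelihood x * (1 - B x) - B x) = 0" and "1 - B x \<noteq> 0"
      using elim by (auto simp: defect_def ind_state_def)
    then have "likelihood x * (1 - B x) - B x = 0" by simp
    then show "B x * (1 + likelihood x) = likelihood x" by (simp add: algebra_simps)
  qed
qed

lemma belief_measurable_signal_algebra[measurable]:
  "u \<in> V \<Longrightarrow> belief u \<in> borel_measurable signal_algebra"
  by (rule measurable_F_signal_algebra[OF _ belief_measurable])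

lemma set_integral_ind1_eq_belief:
  assumes u: "u \<in> V" and A: "A \<in> sets signal_algebra"
  shows "(\<integral>x\<in>A. ind_state 1 x \<partial>M) = (\<integral>x\<in>A. belief u x \<partial>M)"
proof -
  let ?f = "\<lambda>x. indicator A x * belief u x :: real"
  have A_signals: "(\<lambda>x. indicator A x :: real) \<in> borel_measurable signal_algebra"
    using A by simp
  have f_signals: "?f \<in> borel_measurable signal_algebra"
    using A_signals belief_measurable_signal_algebra[OF u] by (rule borel_measurable_times)
  have [measurable]: "(\<lambda>x. indicator A x :: real) \<in> borel_measurable M" "?f \<in> borel_measurable M"
    using A_signals f_signals by (auto intro: measurable_signal_algebraD)
  have A_bounded: "\<bar>indicator A x :: real\<bar> \<le> 1" and f_bounded: "\<bar>?f x\<bar> \<le> 1" for x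
    using belief_nonneg[of u x] belief_le_1[of u x] by (auto simp: indicator_def)
  have odds: "AE x in M. ind_state 0 x * likelihood x * ?f x + ind_state 0 x * ?f x
      = ind_state 0 x * likelihood x * indicator A x"
    using AE_B_eq_likelihood_odds AE_B_eq_belief[OF u]
  proof eventually_elim
    case (elim x)
    show ?case
    proof (cases "S x = 0")
      case True
      then have "indicator A x * (belief u x * (1 + likelihood x)) = indicator A x * likelihood x"
        using elim by simp
      then show ?thesis using True by (simp add: ind_state_def algebra_simps)
    qed (simp add: ind_state_def)
  qed
  have "(\<integral>x. ?f x \<partial>M) = (\<integral>x. ind_state 1 x * ?f x + ind_state 0 x * ?f x \<partial>M)"
    by (intro Bochner_Integration.integral_cong) (auto simp: ind_state_0 algebra_simps)
  also have "\<dots> = (\<integral>x. ind_state 1 x * ?f x \<partial>M) + (\<integral>x. ind_state 0 x * ?f x \<partial>M)"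
    using integrable_ind_state_mult[OF _ f_bounded] by (intro Bochner_Integration.integral_add) auto
  also have "\<dots> = (\<integral>x. ind_state 0 x * likelihood x * ?f x + ind_state 0 x * ?f x \<partial>M)"
    using integral_ind1_signal_algebra[OF f_signals f_bounded] integrable_ind_state_mult[OF _ f_bounded]
      integrable_likelihood_signal_algebra[OF f_signals f_bounded] by simp
  also have "\<dots> = (\<integral>x. ind_state 0 x * likelihood x * indicator A x \<partial>M)"
    using odds by (rule integral_cong_AE[rotated 2]) (auto intro!: borel_measurable_times borel_measurable_add)
  also have "\<dots> = (\<integral>x. ind_state 1 x * indicator A x \<partial>M)"
    using integral_ind1_signal_algebra[OF A_signals A_bounded] by simp
  finally show ?thesis by (simp add: set_lebesgue_integral_def mult.commute)
qed

lemma AE_cond_exp_signal_algebra_eq_belief: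
  assumes u: "u \<in> V"
  shows "AE x in M. real_cond_exp M signal_algebra (ind_state 1) x = belief u x"
proof -
  interpret signals: finite_measure_subalgebra M signal_algebra
    using subalgebra_signal_algebra by unfold_locales
  show ?thesis
  proof (rule signals.real_cond_exp_charact)
    show "integrable M (ind_state 1)"
      by (rule integrable_const_bound[where B=1]) (auto simp: ind_state_def)
    show "integrable M (belief u)"
      using belief_nonneg belief_le_1 u by (intro integrable_const_bound[where B=1]) auto
  qed (use u set_integral_ind1_eq_belief in auto)
qed

lemma AE_B_eq_posterior_signal_algebra: "AE x in M. B x = posterior M signal_algebra S x"
proof -
  obtain u where u: "u \<in> V" using V_nonempty by auto
  show ?thesis using AE_B_eq_belief[OF u] AE_cond_exp_signal_algebra_eq_belief[OF u]
    by eventually_elim (simp add: posterior_eq)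
qed

end

theorem theorem1:
  fixes M :: "'a measure" and S :: "'a \<Rightarrow> nat" and V :: "'v set"
    and W :: "'v \<Rightarrow> 'a \<Rightarrow> 'b" and \<mu>0 \<mu>1 :: "'b measure"
    and F :: "'v \<Rightarrow> 'a measure" and X :: "'a \<Rightarrow> real"
  assumes "prob_space M"
    and "prob_space \<mu>0" and "prob_space \<mu>1" and "sets \<mu>1 = sets \<mu>0" and "\<mu>0 \<noteq> \<mu>1"
    and "absolutely_continuous \<mu>0 \<mu>1" and "absolutely_continuous \<mu>1 \<mu>0"
    and "finite V" and "V \<noteq> {}"
    and "S \<in> measurable M (count_space UNIV)" and "\<forall>x\<in>space M. S x \<in> {0, 1}"
    and "\<forall>v\<in>V. W v \<in> measurable M \<mu>0"
    and law: "\<And>s A. s \<in> {0, 1} \<Longrightarrow> (\<forall>u\<in>V. A u \<in> sets \<mu>0) \<Longrightarrow>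
        measure M {x \<in> space M. S x = s \<and> (\<forall>u\<in>V. W u x \<in> A u)}
          = 1/2 * (\<Prod>u\<in>V. measure (if s = 0 then \<mu>0 else \<mu>1) (A u))"
    and "\<forall>u\<in>V. subalgebra M (F u)"
    and "\<forall>u\<in>V. sets (vimage_algebra (space M) (W u) \<mu>0) \<subseteq> sets (F u)"
    and "\<forall>u\<in>V. sets (F u) \<subseteq> sigma_signals M V W \<mu>0"
    and common: "\<forall>u\<in>V. \<forall>w\<in>V. \<exists>g \<in> borel_measurable (F w).
        AE x in M. posterior M (F u) S x = g x"
    and "X \<in> borel_measurable M"
    and "AE x in M. \<forall>u\<in>V. X x = posterior M (F u) S x"
  shows "AE x in M. X x = posterior M (sigma (space M) (sigma_signals M V W \<mu>0)) S x"
proof -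
  have known: "\<exists>g\<in>borel_measurable (F w). AE x in M. X x = g x" if w: "w \<in> V" for w
  proof -
    obtain u where u: "u \<in> V" using \<open>V \<noteq> {}\<close> by auto
    obtain g where g: "g \<in> borel_measurable (F w)" "AE x in M. posterior M (F u) S x = g x"
      using common u w by blast
    have "AE x in M. X x = g x"
      using g(2) \<open>AE x in M. \<forall>u\<in>V. X x = posterior M (F u) S x\<close>
      by eventually_elim (use u in auto)
    with g(1) show ?thesis by blast
  qed
  have "signal_model M S V W \<mu>0 \<mu>1"
    by (intro signal_model.intro signal_model_axioms.intro) (use assms in auto)
  then interpret common_belief M S V W \<mu>0 \<mu>1 F X
    by (intro common_belief.intro common_belief_axioms.intro) (use assms known in auto)
  show ?thesis using AE_B_eq_posterior_signal_algebra by (simp add: signal_algebra_def)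
qed

end
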